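(* Let $f:\mathbb{R}^d\to\mathbb{R}$ be a two-layer linear network $f(x)=A\frac{1}{\sqrt{k}}Bx$ with $A\in\mathbb{R}^{1\times k}$, $B\in\mathbb{R}^{k\times d}$, where both $A$ and $B$ are trained. Let $X\in\mathbb{R}^{d\times n}$, $y\in\mathbb{R}^{1\times n}$ be a dataset, and let $A^{(t)},B^{(t)}$ be the weights after $t$ steps of (simultaneous) gradient descent on the loss $\frac12\|y-A\frac{1}{\sqrt k}BX\|_2^2$ with constant learning rate $\eta>0$, with $f^{(t)}(x)=A^{(t)}\frac{1}{\sqrt k}B^{(t)}x$. Suppose $\{A^{(0)}_i\}_{i=1}^k$ are i.i.d. random variables with $\mathbb{E}[(A_i^{(0)})^2]=1$ and $B^{(0)}=\mathbf{0}$. Then $$\lim_{k\to\infty}{B^{(2)}}^TB^{(2)}=\lim_{k\to\infty}\nabla f^{(2)}\,{\nabla f^{(2)}}^T,$$ where $\nabla f^{(2)}\in\mathbb{R}^d$ is the (constant) gradient of the linear map $f^{(2)}$.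
   Context: The network width $k$ is sent to infinity, with $A^{(0)}$ drawn i.i.d. for each $k$; all quantities depend on $k$. *)

theory Defs
  imports "HOL-Probability.Probability"
begin

text \<open>A is a vector of length k, represented as nat => real (entries i < k used);
  B is a k x d matrix, represented by its rows B i :: real^'d (rows i < k used).
  The data matrix X is d x n (type real^'n^'d), labels y are 1 x n (real^'n).\<close>

definition net_out :: "nat \<Rightarrow> (nat \<Rightarrow> real) \<Rightarrow> (nat \<Rightarrow> real^'d) \<Rightarrow> real^'d \<Rightarrow> real" where
  "net_out k A B x = (1 / sqrt (real k)) * (\<Sum>i<k. A i * (B i \<bullet> x))"

definition lin_loss :: "nat \<Rightarrow> real^'n^'d \<Rightarrow> real^'n \<Rightarrow> (nat \<Rightarrow> real) \<Rightarrow> (nat \<Rightarrow> real^'d) \<Rightarrow> real" where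
  "lin_loss k X y A B = 1/2 * (\<Sum>m\<in>UNIV. (y $ m - net_out k A B (\<chi> j. X $ j $ m))\<^sup>2)"

definition gradA :: "nat \<Rightarrow> real^'n^'d \<Rightarrow> real^'n \<Rightarrow> (nat \<Rightarrow> real) \<Rightarrow> (nat \<Rightarrow> real^'d) \<Rightarrow> nat \<Rightarrow> real" where
  "gradA k X y A B i = deriv (\<lambda>a. lin_loss k X y (A(i := a)) B) (A i)"

definition gradB :: "nat \<Rightarrow> real^'n^'d \<Rightarrow> real^'n \<Rightarrow> (nat \<Rightarrow> real) \<Rightarrow> (nat \<Rightarrow> real^'d) \<Rightarrow> nat \<Rightarrow> 'd \<Rightarrow> real" where
  "gradB k X y A B i j =
     deriv (\<lambda>b. lin_loss k X y A (B(i := (\<chi> l. if l = j then b else B i $ l)))) (B i $ j)"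

definition gd_step :: "nat \<Rightarrow> real \<Rightarrow> real^'n^'d \<Rightarrow> real^'n \<Rightarrow>
    (nat \<Rightarrow> real) \<times> (nat \<Rightarrow> real^'d) \<Rightarrow> (nat \<Rightarrow> real) \<times> (nat \<Rightarrow> real^'d)" where
  "gd_step k eta X y AB = (case AB of (A, B) \<Rightarrow>
     ((\<lambda>i. A i - eta * gradA k X y A B i),
      (\<lambda>i. \<chi> j. B i $ j - eta * gradB k X y A B i j)))"

definition gd :: "nat \<Rightarrow> real \<Rightarrow> real^'n^'d \<Rightarrow> real^'n \<Rightarrow> (nat \<Rightarrow> real) \<Rightarrow> (nat \<Rightarrow> real^'d) \<Rightarrow> nat \<Rightarrow>
    (nat \<Rightarrow> real) \<times> (nat \<Rightarrow> real^'d)" where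
  "gd k eta X y A0 B0 t = (gd_step k eta X y ^^ t) (A0, B0)"

definition gram :: "nat \<Rightarrow> (nat \<Rightarrow> real^'d) \<Rightarrow> real^'d^'d" where
  "gram k B = (\<chi> j l. \<Sum>i<k. B i $ j * B i $ l)"

definition net_grad :: "nat \<Rightarrow> (nat \<Rightarrow> real) \<Rightarrow> (nat \<Rightarrow> real^'d) \<Rightarrow> real^'d" where
  "net_grad k A B = (1 / sqrt (real k)) *\<^sub>R (\<Sum>i<k. A i *\<^sub>R B i)"

definition outer :: "real^'d \<Rightarrow> real^'d^'d" where
  "outer g = (\<chi> j l. g $ j * g $ l)"

definition conv_in_prob :: "'a measure \<Rightarrow> (nat \<Rightarrow> 'a \<Rightarrow> 'b::metric_space) \<Rightarrow> 'b \<Rightarrow> bool" where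
  "conv_in_prob M Z L \<longleftrightarrow>
     (\<forall>k. Z k \<in> borel_measurable M) \<and>
     (\<forall>e>0. (\<lambda>k. measure M {\<omega> \<in> space M. e < dist (Z k \<omega>) L}) \<longlonglongrightarrow> 0)"

end

theory Submission
  imports Defs "HOL-Real_Asymp.Real_Asymp"
begin

(*
  Starting from B = 0, the first step leaves A unchanged and turns every row of B into a multiple
  of X y.  The second step keeps this rank-one structure: B^(2)_i = (eta / sqrt k) A_i u and
  A^(2)_i = (1 + eta^2 c / k) A_i, where u and c depend only on the data and on the empirical
  second moment s_k = (1/k) sum_i A_i^2.  Hence B^T B = eta^2 s_k u u^T and
  grad f grad f^T = (eta s_k (1 + eta^2 c / k))^2 u u^T.  By the weak law of large numbers
  s_k -> 1 in probability, and both expressions are continuous in (s_k, 1/k), so both converge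
  to eta^2 u u^T taken at s = 1.
*)

section \<open>Two steps of gradient descent from B = 0\<close>

lemma net_out_eq_inner: "net_out k A B x = net_grad k A B \<bullet> x"
  by (simp add: net_out_def net_grad_def inner_sum_left)

definition residual ::
    "nat \<Rightarrow> real^'n^'d \<Rightarrow> real^'n \<Rightarrow> (nat \<Rightarrow> real) \<Rightarrow> (nat \<Rightarrow> real^'d) \<Rightarrow> real^'n" where
  "residual k X y A B = y - net_grad k A B v* X"

lemma residual_nth: "residual k X y A B $ m = y $ m - net_out k A B (column m X)"
  by (simp add: residual_def net_out_eq_inner vector_matrix_mult_def inner_vec_def column_def
      mult.commute)

lemma lin_loss_eq_norm: "lin_loss k X y A B = (norm (residual k X y A B))\<^sup>2 / 2"
  unfolding power2_norm_eq_inner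
  by (simp add: lin_loss_def residual_nth column_def inner_vec_def power2_eq_square)

lemma has_real_derivative_half_norm_sq_line:
  fixes r p :: "'a::real_inner"
  shows "((\<lambda>a. (norm (r - (a - a0) *\<^sub>R p))\<^sup>2 / 2) has_real_derivative - (r \<bullet> p)) (at a0)"
proof -
  let ?q = "\<lambda>a. (r \<bullet> r - 2 * (a - a0) * (r \<bullet> p) + (a - a0)\<^sup>2 * (p \<bullet> p)) / 2"
  have "(norm (r - (a - a0) *\<^sub>R p))\<^sup>2 / 2 = ?q a" for a
    unfolding power2_norm_eq_inner
    by (simp add: inner_commute power2_eq_square algebra_simps)
  moreover have "(?q has_real_derivative - (r \<bullet> p)) (at a0)"
    by (auto intro!: derivative_eq_intros)
  ultimately show ?thesis by simp
qed

lemma net_grad_update_coeff: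
  "net_grad k (A(i := a)) B = net_grad k A B + (if i < k then ((a - A i) / sqrt k) *\<^sub>R B i else 0)"
proof -
  have "(\<Sum>i'<k. (A(i := a)) i' *\<^sub>R B i')
      = (\<Sum>i'<k. A i' *\<^sub>R B i' + (if i' = i then (a - A i) *\<^sub>R B i else 0))"
    by (intro sum.cong) (auto simp: algebra_simps)
  then show ?thesis
    by (simp add: net_grad_def sum.distrib scaleR_add_right)
qed

lemma net_grad_update_row:
  "net_grad k A (B(i := b)) = net_grad k A B + (if i < k then (A i / sqrt k) *\<^sub>R (b - B i) else 0)"
proof -
  have "(\<Sum>i'<k. A i' *\<^sub>R (B(i := b)) i')
      = (\<Sum>i'<k. A i' *\<^sub>R B i' + (if i' = i then A i *\<^sub>R (b - B i) else 0))"
    by (intro sum.cong) (auto simp: algebra_simps)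
  then show ?thesis
    by (simp add: net_grad_def sum.distrib scaleR_add_right)
qed

lemma gradA_eq:
  "gradA k X y A B i = (if i < k then - (B i \<bullet> (X *v residual k X y A B)) / sqrt k else 0)"
proof -
  define p where "p = (if i < k then (1 / sqrt k) *\<^sub>R (B i v* X) else 0)"
  have "residual k X y (A(i := a)) B = residual k X y A B - (a - A i) *\<^sub>R p" for a
    by (simp add: residual_def net_grad_update_coeff p_def vector_matrix_left_distrib
        scaleR_vector_matrix_assoc)
  then have "gradA k X y A B i = - (residual k X y A B \<bullet> p)"
    unfolding gradA_def lin_loss_eq_norm
    by (simp add: DERIV_imp_deriv[OF has_real_derivative_half_norm_sq_line])
  then show ?thesis
    by (simp add: p_def dot_lmul_matrix inner_commute)
qed

lemma gradB_eq:
  "gradB k X y A B i j = (if i < k then - A i * (X *v residual k X y A B) $ j / sqrt k else 0)"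
proof -
  define p where "p = (if i < k then (A i / sqrt k) *\<^sub>R (axis j 1 v* X) else 0)"
  have row: "(\<chi> l. if l = j then b else B i $ l) - B i = (b - B i $ j) *\<^sub>R axis j 1" for b
    by (simp add: vec_eq_iff axis_def)
  have "residual k X y A (B(i := (\<chi> l. if l = j then b else B i $ l)))
      = residual k X y A B - (b - B i $ j) *\<^sub>R p" for b
    by (simp add: residual_def net_grad_update_row row p_def vector_matrix_left_distrib
        scaleR_vector_matrix_assoc)
  then have "gradB k X y A B i j = - (residual k X y A B \<bullet> p)"
    unfolding gradB_def lin_loss_eq_norm
    by (simp add: DERIV_imp_deriv[OF has_real_derivative_half_norm_sq_line])
  then show ?thesis
    by (simp add: p_def inner_commute[of "residual k X y A B"] dot_lmul_matrix inner_axis')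
qed

lemma gd_step_eq:
  "gd_step k eta X y (A, B) =
    ((\<lambda>i. if i < k then A i + eta / sqrt k * (B i \<bullet> (X *v residual k X y A B)) else A i),
     (\<lambda>i. if i < k then B i + (eta / sqrt k * A i) *\<^sub>R (X *v residual k X y A B) else B i))"
  by (auto simp: gd_step_def gradA_eq gradB_eq fun_eq_iff vec_eq_iff)

definition mean_sq :: "nat \<Rightarrow> (nat \<Rightarrow> real) \<Rightarrow> real" where
  "mean_sq k A = (\<Sum>i<k. (A i)\<^sup>2) / k"

(*
  Functions of the empirical second moment s of A^(0): the residual y - f^(1)(X) after one
  step, the common direction u of the rows of B^(2), and the scalar c with
  A^(2)_i = (1 + eta^2 c / k) A^(0)_i.
*)
definition first_step_residual :: "real^'n^'d \<Rightarrow> real^'n \<Rightarrow> real \<Rightarrow> real \<Rightarrow> real^'n" where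
  "first_step_residual X y eta s = y - (eta * s) *\<^sub>R ((X *v y) v* X)"

definition second_step_row :: "real^'n^'d \<Rightarrow> real^'n \<Rightarrow> real \<Rightarrow> real \<Rightarrow> real^'d" where
  "second_step_row X y eta s = X *v y + X *v first_step_residual X y eta s"

definition second_step_gain :: "real^'n^'d \<Rightarrow> real^'n \<Rightarrow> real \<Rightarrow> real \<Rightarrow> real" where
  "second_step_gain X y eta s = (X *v y) \<bullet> (X *v first_step_residual X y eta s)"

lemma sum_mult_rescaled_weights:
  "(\<Sum>i<k. A i * (if i < k then c / sqrt k * A i else 0)) / sqrt k = c * mean_sq k A"
proof -
  have "(\<Sum>i<k. A i * (if i < k then c / sqrt k * A i else 0)) = c / sqrt k * (\<Sum>i<k. (A i)\<^sup>2)"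
    by (simp add: sum_distrib_left power2_eq_square mult_ac)
  then show ?thesis
    by (cases "k = 0") (simp_all add: mean_sq_def)
qed

lemma sum_sq_rescaled_weights:
  "(\<Sum>i<k. (if i < k then c / sqrt k * A i else 0)\<^sup>2) = c\<^sup>2 * mean_sq k A"
proof -
  have "(\<Sum>i<k. (if i < k then c / sqrt k * A i else 0)\<^sup>2) = (\<Sum>i<k. (c / sqrt k)\<^sup>2 * (A i)\<^sup>2)"
    by (intro sum.cong) (simp_all add: power_mult_distrib power_divide)
  also have "\<dots> = (c / sqrt k)\<^sup>2 * (\<Sum>i<k. (A i)\<^sup>2)"
    by (simp add: sum_distrib_left)
  also have "\<dots> = c\<^sup>2 * mean_sq k A"
    by (simp add: mean_sq_def power_divide)
  finally show ?thesis .
qed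

lemma net_grad_rank_one: "net_grad k A (\<lambda>i. c i *\<^sub>R u) = ((\<Sum>i<k. A i * c i) / sqrt k) *\<^sub>R u"
  by (simp add: net_grad_def scaleR_sum_left[symmetric])

lemma gram_rank_one: "gram k (\<lambda>i. c i *\<^sub>R u) = (\<Sum>i<k. (c i)\<^sup>2) *\<^sub>R outer u"
  by (simp add: gram_def outer_def vec_eq_iff sum_distrib_left power2_eq_square mult_ac)

lemma outer_scaleR: "outer (c *\<^sub>R u) = c\<^sup>2 *\<^sub>R outer u"
  by (simp add: outer_def vec_eq_iff power2_eq_square mult_ac)

lemma gd_step_from_zero:
  "gd_step k eta X y (A, \<lambda>i. 0) = (A, \<lambda>i. (if i < k then eta / sqrt k * A i else 0) *\<^sub>R (X *v y))"
  by (simp add: gd_step_eq residual_def net_grad_def fun_eq_iff)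

lemma gd_step_after_first_step:
  fixes X :: "real^'n^'d"
  shows "gd_step k eta X y (A, \<lambda>i. (if i < k then eta / sqrt k * A i else 0) *\<^sub>R (X *v y)) =
    ((\<lambda>i. if i < k then (1 + eta\<^sup>2 * second_step_gain X y eta (mean_sq k A) / k) * A i else A i),
     (\<lambda>i. (if i < k then eta / sqrt k * A i else 0) *\<^sub>R second_step_row X y eta (mean_sq k A)))"
proof -
  have "net_grad k A (\<lambda>i. (if i < k then eta / sqrt k * A i else 0) *\<^sub>R (X *v y))
      = (eta * mean_sq k A) *\<^sub>R (X *v y)"
    by (simp only: net_grad_rank_one sum_mult_rescaled_weights)
  then have "residual k X y A (\<lambda>i. (if i < k then eta / sqrt k * A i else 0) *\<^sub>R (X *v y))
      = first_step_residual X y eta (mean_sq k A)"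
    by (simp add: residual_def first_step_residual_def scaleR_vector_matrix_assoc)
  then show ?thesis
    by (auto simp: gd_step_eq second_step_row_def second_step_gain_def fun_eq_iff algebra_simps
        power2_eq_square)
qed

lemma gd_two_steps_from_zero:
  fixes X :: "real^'n^'d"
  shows "gd k eta X y A (\<lambda>i. 0) 2 =
    ((\<lambda>i. if i < k then (1 + eta\<^sup>2 * second_step_gain X y eta (mean_sq k A) / k) * A i else A i),
     (\<lambda>i. (if i < k then eta / sqrt k * A i else 0) *\<^sub>R second_step_row X y eta (mean_sq k A)))"
  by (simp add: gd_def numeral_2_eq_2 gd_step_from_zero gd_step_after_first_step)

lemma gram_gd_two_steps:
  fixes X :: "real^'n^'d"
  shows "gram k (snd (gd k eta X y A (\<lambda>i. 0) 2))
    = (eta\<^sup>2 * mean_sq k A) *\<^sub>R outer (second_step_row X y eta (mean_sq k A))"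
  by (simp only: gd_two_steps_from_zero snd_conv gram_rank_one sum_sq_rescaled_weights)

lemma outer_net_grad_gd_two_steps:
  fixes X :: "real^'n^'d"
  shows "outer (case gd k eta X y A (\<lambda>i. 0) 2 of (A, B) \<Rightarrow> net_grad k A B)
    = (eta * mean_sq k A * (1 + eta\<^sup>2 * second_step_gain X y eta (mean_sq k A) / k))\<^sup>2
        *\<^sub>R outer (second_step_row X y eta (mean_sq k A))"
proof -
  let ?g = "1 + eta\<^sup>2 * second_step_gain X y eta (mean_sq k A) / k"
  have "(\<Sum>i<k. (if i < k then ?g * A i else A i) * (if i < k then eta / sqrt k * A i else 0))
      = ?g * (\<Sum>i<k. A i * (if i < k then eta / sqrt k * A i else 0))"
    by (simp add: sum_distrib_right mult_ac)
  then have "net_grad k (\<lambda>i. if i < k then ?g * A i else A i)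
      (\<lambda>i. (if i < k then eta / sqrt k * A i else 0) *\<^sub>R second_step_row X y eta (mean_sq k A))
      = (eta * mean_sq k A * ?g) *\<^sub>R second_step_row X y eta (mean_sq k A)"
    unfolding net_grad_rank_one
    by (simp only: times_divide_eq_right[symmetric] sum_mult_rescaled_weights) (simp add: mult_ac)
  then show ?thesis
    by (simp only: gd_two_steps_from_zero prod.case outer_scaleR)
qed

section \<open>A weak law of large numbers for triangular arrays\<close>

definition truncate_at :: "real \<Rightarrow> real \<Rightarrow> real" where
  "truncate_at T x = (if \<bar>x\<bar> \<le> T then x else 0)"

lemma truncate_at_measurable [measurable]: "truncate_at T \<in> borel_measurable borel"
  unfolding truncate_at_def by measurable

lemma truncate_at_bounded: "T \<ge> 0 \<Longrightarrow> truncate_at T x \<in> {-T..T}"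
  by (auto simp: truncate_at_def)

lemma abs_truncate_at_le: "\<bar>truncate_at T x\<bar> \<le> \<bar>x\<bar>"
  by (simp add: truncate_at_def)

lemma abs_truncation_error_le: "\<bar>x - truncate_at T x\<bar> \<le> \<bar>x\<bar>"
  by (simp add: truncate_at_def)

lemma ex_truncation_error_integral_less:
  fixes D :: "real measure"
  assumes sets_D: "sets D = sets borel" and int: "integrable D (\<lambda>x. x)" and "r > 0"
  shows "\<exists>T > 0. (\<integral>x. \<bar>x - truncate_at T x\<bar> \<partial>D) < r"
proof -
  have "(\<lambda>n. \<integral>x. \<bar>x - truncate_at (real n) x\<bar> \<partial>D) \<longlonglongrightarrow> (\<integral>x. 0 \<partial>D)"
  proof (rule integral_dominated_convergence[where w = "\<lambda>x. \<bar>x\<bar>"])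
    show "AE x in D. (\<lambda>n. \<bar>x - truncate_at (real n) x\<bar>) \<longlonglongrightarrow> 0"
    proof (rule AE_I2)
      fix x :: real
      obtain N :: nat where "\<bar>x\<bar> \<le> real N"
        using real_arch_simple by blast
      then have "\<forall>\<^sub>F n in sequentially. \<bar>x\<bar> \<le> real n"
        unfolding eventually_sequentially by (meson order_trans of_nat_le_iff)
      then show "(\<lambda>n. \<bar>x - truncate_at (real n) x\<bar>) \<longlonglongrightarrow> 0"
        by (rule tendsto_eventually[OF eventually_mono]) (simp add: truncate_at_def)
    qed
    show "(\<lambda>x. \<bar>x - truncate_at (real n) x\<bar>) \<in> borel_measurable D" for n
      unfolding measurable_cong_sets[OF sets_D refl] by measurable
    show "AE x in D. norm \<bar>x - truncate_at (real n) x\<bar> \<le> \<bar>x\<bar>" for n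
      by (simp add: abs_truncation_error_le)
  qed (simp_all add: int)
  then have "\<forall>\<^sub>F n in sequentially. (\<integral>x. \<bar>x - truncate_at (real n) x\<bar> \<partial>D) < r \<and> n > 0"
    using \<open>r > 0\<close> by (intro eventually_conj order_tendstoD(2) eventually_gt_at_top) simp_all
  then obtain n where "(\<integral>x. \<bar>x - truncate_at (real n) x\<bar> \<partial>D) < r" and "n > 0"
    using eventually_happens'[OF sequentially_bot] by blast
  then show ?thesis
    by (intro exI[of _ "real n"]) simp
qed

lemma (in prob_space) prob_truncated_mean_deviation_le:
  fixes W :: "nat \<Rightarrow> 'a \<Rightarrow> real" and D :: "real measure"
  assumes indep: "indep_vars (\<lambda>_. borel) W {..<k}"
    and distr_W: "\<And>i. i < k \<Longrightarrow> distr M borel (W i) = D"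
    and "k > 0" and "T > 0" and "\<epsilon> \<ge> 0"
  shows "prob {\<omega> \<in> space M. \<epsilon> \<le> \<bar>(\<Sum>i<k. truncate_at T (W i \<omega>)) / k - (\<integral>x. truncate_at T x \<partial>D)\<bar>}
           \<le> 2 * exp (- real k * \<epsilon>\<^sup>2 / (2 * T\<^sup>2))"
proof -
  define P where "P = (\<lambda>i \<omega>. truncate_at T (W i \<omega>))"
  have [measurable]: "W i \<in> borel_measurable M" if "i < k" for i
    using indep that by (simp add: indep_vars_def)
  have distr_P: "distr M borel (P i) = distr D borel (truncate_at T)" if "i < k" for i
    using that distr_distr[of "truncate_at T" borel borel "W i" M] distr_W[OF that]
    by (simp add: P_def comp_def)
  interpret Hoeffding_ineq_iid M "{..<k}" P "P 0" "-T" T "\<integral>x. truncate_at T x \<partial>D"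
  proof unfold_locales
    show "indep_vars (\<lambda>_. borel) P {..<k}"
      unfolding P_def by (rule indep_vars_compose2[OF indep]) simp
    show "distr M borel (P i) = distr M borel (P 0)" if "i \<in> {..<k}" for i
      using that \<open>k > 0\<close> by (simp add: distr_P)
    show "(\<integral>x. truncate_at T x \<partial>D) \<equiv> expectation (P 0)"
      using \<open>k > 0\<close> integral_distr[of "W 0" M borel "truncate_at T"] distr_W[of 0]
      by (simp add: P_def)
  qed (use \<open>k > 0\<close> \<open>T > 0\<close> truncate_at_bounded[of T] in \<open>auto simp: P_def\<close>)
  show ?thesis
    using Hoeffding_ineq_abs_ge'[of \<epsilon>] assms(3-5)
    by (simp add: P_def lessThan_empty_iff power2_eq_square field_simps)
qed

lemma (in prob_space) prob_mean_truncation_error_ge_le: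
  fixes W :: "nat \<Rightarrow> 'a \<Rightarrow> real" and D :: "real measure"
  assumes [measurable]: "\<And>i. i < k \<Longrightarrow> W i \<in> borel_measurable M"
    and distr_W: "\<And>i. i < k \<Longrightarrow> distr M borel (W i) = D"
    and int: "integrable D (\<lambda>x. x)" and "k > 0" and "c > 0"
  shows "prob {\<omega> \<in> space M. c \<le> (\<Sum>i<k. \<bar>W i \<omega> - truncate_at T (W i \<omega>)\<bar>) / k}
           \<le> (\<integral>x. \<bar>x - truncate_at T x\<bar> \<partial>D) / c"
proof -
  let ?err = "\<lambda>x. \<bar>x - truncate_at T x\<bar>"
  have sets_D: "sets D = sets borel"
    using distr_W[OF \<open>k > 0\<close>] by auto
  have "integrable D ?err"
  proof (rule Bochner_Integration.integrable_bound[OF int])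
    show "?err \<in> borel_measurable D"
      by (simp add: measurable_cong_sets[OF sets_D refl])
  qed (simp add: abs_truncation_error_le)
  then have integrable: "integrable M (\<lambda>\<omega>. ?err (W i \<omega>))"
    and integral: "(\<integral>\<omega>. ?err (W i \<omega>) \<partial>M) = (\<integral>x. ?err x \<partial>D)" if "i < k" for i
    using that integrable_distr_eq[of "W i" M borel ?err] integral_distr[of "W i" M borel ?err]
      distr_W[OF that] by simp_all
  have "prob {\<omega> \<in> space M. c \<le> (\<Sum>i<k. ?err (W i \<omega>)) / k}
      \<le> (\<integral>\<omega>. (\<Sum>i<k. ?err (W i \<omega>)) / k \<partial>M) / c"
    using \<open>c > 0\<close>
    by (intro integral_Markov_inequality_measure[where A = "space M"] integrable_divide
        Bochner_Integration.integrable_sum integrable) simp_all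
  also have "(\<integral>\<omega>. (\<Sum>i<k. ?err (W i \<omega>)) / k \<partial>M) = (\<integral>x. ?err x \<partial>D)"
    using \<open>k > 0\<close> by (simp add: integral_sum integrable integral)
  finally show ?thesis .
qed

(*
  Only a first moment is available: Hoeffding's inequality controls the truncated variables and
  Markov's inequality the truncation error.  If the tail integral is at least e / 3, the bound
  exceeds 1 and holds trivially.
*)
lemma (in prob_space) prob_sample_mean_deviation_le:
  fixes W :: "nat \<Rightarrow> 'a \<Rightarrow> real" and D :: "real measure"
  assumes indep: "indep_vars (\<lambda>_. borel) W {..<k}"
    and distr_W: "\<And>i. i < k \<Longrightarrow> distr M borel (W i) = D"
    and int: "integrable D (\<lambda>x. x)"
    and k: "k > 0" and T: "T > 0" and e: "e > 0"
  shows "prob {\<omega> \<in> space M. e < \<bar>(\<Sum>i<k. W i \<omega>) / k - (\<integral>x. x \<partial>D)\<bar>}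
           \<le> 2 * exp (- real k * e\<^sup>2 / (18 * T\<^sup>2)) + 3 * (\<integral>x. \<bar>x - truncate_at T x\<bar> \<partial>D) / e"
    (is "prob ?dev \<le> ?hoeffding + 3 * ?\<tau> / e")
proof (cases "?\<tau> < e / 3")
  case False
  then have "1 \<le> 3 * ?\<tau> / e"
    using e by (simp add: field_simps)
  moreover have "prob ?dev \<le> 1" and "0 \<le> ?hoeffding"
    by simp_all
  ultimately show ?thesis
    by linarith
next
  case True
  have W_meas [measurable]: "W i \<in> borel_measurable M" if "i < k" for i
    using indep that by (simp add: indep_vars_def)
  let ?m = "\<integral>x. truncate_at T x \<partial>D"
  let ?P = "\<lambda>\<omega>. (\<Sum>i<k. truncate_at T (W i \<omega>)) / k"
  let ?err = "\<lambda>\<omega>. (\<Sum>i<k. \<bar>W i \<omega> - truncate_at T (W i \<omega>)\<bar>) / k"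
  have sets_D: "sets D = sets borel"
    using distr_W[OF k] by auto
  have "integrable D (truncate_at T)"
  proof (rule Bochner_Integration.integrable_bound[OF int])
    show "truncate_at T \<in> borel_measurable D"
      by (simp add: measurable_cong_sets[OF sets_D refl])
  qed (simp add: abs_truncate_at_le)
  then have mean_split: "(\<integral>x. x \<partial>D) = ?m + (\<integral>x. x - truncate_at T x \<partial>D)"
    using Bochner_Integration.integral_diff[OF int] by simp
  have "?dev \<subseteq> {\<omega> \<in> space M. e / 3 \<le> \<bar>?P \<omega> - ?m\<bar>} \<union> {\<omega> \<in> space M. e / 3 \<le> ?err \<omega>}"
  proof safe
    fix \<omega> assume "\<omega> \<in> space M" and dev: "e < \<bar>(\<Sum>i<k. W i \<omega>) / k - (\<integral>x. x \<partial>D)\<bar>"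
      and "\<not> e / 3 \<le> ?err \<omega>"
    moreover have "\<bar>(\<integral>x. x - truncate_at T x \<partial>D)\<bar> \<le> ?\<tau>"
      using integral_norm_bound[of D "\<lambda>x. x - truncate_at T x"] by simp
    moreover have "\<bar>(\<Sum>i<k. W i \<omega> - truncate_at T (W i \<omega>)) / k\<bar> \<le> ?err \<omega>"
      by (simp add: divide_right_mono sum_abs)
    moreover have "(\<Sum>i<k. W i \<omega>) / k - (\<integral>x. x \<partial>D)
        = (?P \<omega> - ?m) + ((\<Sum>i<k. W i \<omega> - truncate_at T (W i \<omega>)) / k - (\<integral>x. x - truncate_at T x \<partial>D))"
      by (simp add: mean_split sum_subtractf diff_divide_distrib)
    ultimately show "e / 3 \<le> \<bar>?P \<omega> - ?m\<bar>"
      using True by linarith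
  qed
  then have "prob ?dev \<le> prob {\<omega> \<in> space M. e / 3 \<le> \<bar>?P \<omega> - ?m\<bar>}
      + prob {\<omega> \<in> space M. e / 3 \<le> ?err \<omega>}"
    by (intro order_trans[OF finite_measure_mono measure_Un_le]) simp_all
  also have "\<dots> \<le> ?hoeffding + 3 * ?\<tau> / e"
    using prob_truncated_mean_deviation_le[OF indep distr_W k T, of "e / 3"]
      prob_mean_truncation_error_ge_le[where W = W and T = T and c = "e / 3",
        OF W_meas distr_W int k] e
    by (intro add_mono) (simp_all add: power_divide mult.commute)
  finally show ?thesis .
qed

lemma (in prob_space) conv_in_prob_sample_mean:
  fixes W :: "nat \<Rightarrow> nat \<Rightarrow> 'a \<Rightarrow> real" and D :: "real measure"
  assumes indep: "\<And>k. indep_vars (\<lambda>_. borel) (W k) {..<k}"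
    and distr_W: "\<And>k i. i < k \<Longrightarrow> distr M borel (W k i) = D"
    and int: "integrable D (\<lambda>x. x)"
  shows "conv_in_prob M (\<lambda>k \<omega>. (\<Sum>i<k. W k i \<omega>) / k) (\<integral>x. x \<partial>D)"
  unfolding conv_in_prob_def
proof (intro conjI allI impI)
  show "(\<lambda>\<omega>. (\<Sum>i<k. W k i \<omega>) / k) \<in> borel_measurable M" for k
    using indep[of k]
    by (intro borel_measurable_divide borel_measurable_sum) (auto simp: indep_vars_def)
  fix e :: real
  assume e: "e > 0"
  let ?dev = "\<lambda>k. prob {\<omega> \<in> space M. e < dist ((\<Sum>i<k. W k i \<omega>) / k) (\<integral>x. x \<partial>D)}"
  show "?dev \<longlonglongrightarrow> 0"
  proof (rule order_tendstoI)
    show "\<forall>\<^sub>F k in sequentially. a < ?dev k" if "a < 0" for a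
      using that by (simp add: order_less_le_trans)
    fix a :: real
    assume a: "a > 0"
    have sets_D: "sets D = sets borel"
      using distr_W[of 0 1] by auto
    obtain T where T: "T > 0" and "(\<integral>x. \<bar>x - truncate_at T x\<bar> \<partial>D) < a * e / 6"
      using ex_truncation_error_integral_less[OF sets_D int, of "a * e / 6"] a e by auto
    then have tail: "3 * (\<integral>x. \<bar>x - truncate_at T x\<bar> \<partial>D) / e < a / 2"
      using e by (simp add: field_simps)
    have "(\<lambda>k. 2 * exp (- real k * e\<^sup>2 / (18 * T\<^sup>2))) \<longlonglongrightarrow> 0"
      using e T by real_asymp
    then have "\<forall>\<^sub>F k in sequentially. 2 * exp (- real k * e\<^sup>2 / (18 * T\<^sup>2)) < a / 2"
      by (rule order_tendstoD(2)) (use a in simp)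
    then show "\<forall>\<^sub>F k in sequentially. ?dev k < a"
      using eventually_gt_at_top[of 0]
    proof eventually_elim
      case (elim k)
      then have "?dev k
          \<le> 2 * exp (- real k * e\<^sup>2 / (18 * T\<^sup>2)) + 3 * (\<integral>x. \<bar>x - truncate_at T x\<bar> \<partial>D) / e"
        using prob_sample_mean_deviation_le[OF indep distr_W int _ T e] by (simp add: dist_real_def)
      then show ?case
        using elim tail by simp
    qed
  qed
qed

lemma (in prob_space) conv_in_prob_mean_sq:
  fixes A :: "nat \<Rightarrow> nat \<Rightarrow> 'a \<Rightarrow> real" and D :: "real measure"
  assumes indep: "\<And>k. indep_vars (\<lambda>_. borel) (A k) {..<k}"
    and distr_A: "\<And>k i. i < k \<Longrightarrow> distr M borel (A k i) = D"
    and int: "integrable D (\<lambda>x. x\<^sup>2)"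
  shows "conv_in_prob M (\<lambda>k \<omega>. mean_sq k (\<lambda>i. A k i \<omega>)) (\<integral>x. x\<^sup>2 \<partial>D)"
proof -
  have sets_D: "sets D = sets borel"
    using distr_A[of 0 1] by auto
  have "distr M borel (\<lambda>\<omega>. (A k i \<omega>)\<^sup>2) = distr D borel (\<lambda>x. x\<^sup>2)" if "i < k" for k i
    using that indep[of k] distr_distr[of "\<lambda>x. x\<^sup>2" borel borel "A k i" M] distr_A[OF that]
    by (simp add: comp_def indep_vars_def)
  moreover have "integrable (distr D borel (\<lambda>x. x\<^sup>2)) (\<lambda>x. x)"
    and "(\<integral>x. x \<partial>distr D borel (\<lambda>x. x\<^sup>2)) = (\<integral>x. x\<^sup>2 \<partial>D)"
    using int
    by (simp_all add: integrable_distr_eq integral_distr measurable_cong_sets[OF sets_D refl])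
  moreover have "indep_vars (\<lambda>_. borel) (\<lambda>i \<omega>. (A k i \<omega>)\<^sup>2) {..<k}" for k
    by (rule indep_vars_compose2[OF indep]) simp
  ultimately show ?thesis
    using conv_in_prob_sample_mean[of "\<lambda>k i \<omega>. (A k i \<omega>)\<^sup>2" "distr D borel (\<lambda>x. x\<^sup>2)"]
    by (simp add: mean_sq_def)
qed

section \<open>Continuous images of limits in probability\<close>

lemma (in prob_space) conv_in_prob_continuous_map:
  fixes Z :: "nat \<Rightarrow> 'a \<Rightarrow> real" and t :: "nat \<Rightarrow> real" and F :: "real \<times> real \<Rightarrow> 'b::metric_space"
  assumes Z: "conv_in_prob M Z z" and t: "t \<longlonglongrightarrow> t0"
    and F: "continuous_on UNIV F"
  shows "conv_in_prob M (\<lambda>k \<omega>. F (Z k \<omega>, t k)) (F (z, t0))"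
  unfolding conv_in_prob_def
proof (intro conjI allI impI)
  have [measurable]: "Z k \<in> borel_measurable M" for k
    using Z by (simp add: conv_in_prob_def)
  have Z_lim: "\<And>e. e > 0 \<Longrightarrow> (\<lambda>k. prob {\<omega> \<in> space M. e < dist (Z k \<omega>) z}) \<longlonglongrightarrow> 0"
    using Z by (simp add: conv_in_prob_def)
  have [measurable]: "F \<in> borel_measurable borel"
    using F by (rule borel_measurable_continuous_onI)
  show "(\<lambda>\<omega>. F (Z k \<omega>, t k)) \<in> borel_measurable M" for k
    by measurable
  fix e :: real
  assume "e > 0"
  then obtain d where "d > 0" and d: "\<And>p. dist p (z, t0) < d \<Longrightarrow> dist (F p) (F (z, t0)) < e"
    using F by (metis UNIV_I continuous_on_iff)
  let ?dev = "\<lambda>k. prob {\<omega> \<in> space M. e < dist (F (Z k \<omega>, t k)) (F (z, t0))}"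
  have "\<forall>\<^sub>F k in sequentially. dist (t k) t0 < d / 2"
    by (rule tendstoD[OF t]) (use \<open>d > 0\<close> in simp)
  then have "\<forall>\<^sub>F k in sequentially. ?dev k \<le> prob {\<omega> \<in> space M. d / 2 < dist (Z k \<omega>) z}"
  proof eventually_elim
    case (elim k)
    have close: "dist (Z k \<omega>, t k) (z, t0) < d" if "dist (Z k \<omega>) z \<le> d / 2" for \<omega>
    proof -
      have "dist (Z k \<omega>, t k) (z, t0) \<le> dist (Z k \<omega>) z + dist (t k) t0"
        using sqrt_sum_squares_le_sum_abs by (simp add: dist_Pair_Pair dist_real_def)
      then show ?thesis
        using that elim by linarith
    qed
    show ?case
    proof (intro finite_measure_mono subsetI)
      fix \<omega>
      assume "\<omega> \<in> {\<omega> \<in> space M. e < dist (F (Z k \<omega>, t k)) (F (z, t0))}"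
      then show "\<omega> \<in> {\<omega> \<in> space M. d / 2 < dist (Z k \<omega>) z}"
        using d[of "(Z k \<omega>, t k)"] close[of \<omega>] by force
    qed simp
  qed
  moreover have "(\<lambda>k. prob {\<omega> \<in> space M. d / 2 < dist (Z k \<omega>) z}) \<longlonglongrightarrow> 0"
    using Z_lim[of "d / 2"] \<open>d > 0\<close> by simp
  ultimately show "?dev \<longlonglongrightarrow> 0"
    using tendsto_sandwich[of "\<lambda>_. 0" ?dev] by simp
qed

lemma continuous_on_outer [continuous_intros]:
  "continuous_on S f \<Longrightarrow> continuous_on S (\<lambda>x. outer (f x))"
  unfolding outer_def by (intro continuous_intros)

lemma continuous_on_second_step_row [continuous_intros]:
  "continuous_on S f \<Longrightarrow> continuous_on S (\<lambda>x. second_step_row X y eta (f x))"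
  unfolding second_step_row_def first_step_residual_def
  by (intro continuous_intros bounded_linear.continuous_on[OF matrix_vector_mul_bounded_linear])

lemma continuous_on_second_step_gain [continuous_intros]:
  "continuous_on S f \<Longrightarrow> continuous_on S (\<lambda>x. second_step_gain X y eta (f x))"
  unfolding second_step_gain_def first_step_residual_def
  by (intro continuous_intros bounded_linear.continuous_on[OF matrix_vector_mul_bounded_linear])

theorem proposition4:
  fixes M :: "'a measure" and A0 :: "nat \<Rightarrow> nat \<Rightarrow> 'a \<Rightarrow> real"
    and X :: "real^'n^'d" and y :: "real^'n" and eta :: real
  assumes "prob_space M"
    and "eta > 0"
    and "\<And>k i. i < k \<Longrightarrow> A0 k i \<in> borel_measurable M"
    and "\<And>k. prob_space.indep_vars M (\<lambda>_. borel) (A0 k) {..<k}"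
    and "\<And>k i k' i'. i < k \<Longrightarrow> i' < k' \<Longrightarrow> distr M borel (A0 k i) = distr M borel (A0 k' i')"
    and "\<And>k i. i < k \<Longrightarrow> integrable M (\<lambda>\<omega>. (A0 k i \<omega>)\<^sup>2)"
    and "\<And>k i. i < k \<Longrightarrow> (\<integral>\<omega>. (A0 k i \<omega>)\<^sup>2 \<partial>M) = 1"
  shows "\<exists>L :: real^'d^'d.
     conv_in_prob M (\<lambda>k \<omega>. gram k (snd (gd k eta X y (\<lambda>i. A0 k i \<omega>) (\<lambda>i. 0) 2))) L \<and>
     conv_in_prob M (\<lambda>k \<omega>. outer (case gd k eta X y (\<lambda>i. A0 k i \<omega>) (\<lambda>i. 0) 2 of
                                    (A, B) \<Rightarrow> net_grad k A B)) L"
proof -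
  interpret prob_space M by (rule assms(1))
  define D where "D = distr M borel (A0 1 0)"
  have distr_A0: "distr M borel (A0 k i) = D" if "i < k" for k i
    using assms(5)[OF that, of 0 1] by (simp add: D_def)
  have "integrable D (\<lambda>x. x\<^sup>2)" and "(\<integral>x. x\<^sup>2 \<partial>D) = 1"
    using assms(3,6,7)[of 0 1] by (simp_all add: D_def integrable_distr_eq integral_distr)
  then have mean_sq_limit: "conv_in_prob M (\<lambda>k \<omega>. mean_sq k (\<lambda>i. A0 k i \<omega>)) 1"
    using conv_in_prob_mean_sq[OF assms(4) distr_A0] by simp
  let ?row = "second_step_row X y eta" and ?gain = "second_step_gain X y eta"
  let ?L = "eta\<^sup>2 *\<^sub>R outer (?row 1)"
  have "continuous_on UNIV (\<lambda>p. (eta\<^sup>2 * fst p) *\<^sub>R outer (?row (fst p)))"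
    by (intro continuous_intros)
  from conv_in_prob_continuous_map[OF mean_sq_limit lim_1_over_n this]
  have gram_limit: "conv_in_prob M (\<lambda>k \<omega>. gram k (snd (gd k eta X y (\<lambda>i. A0 k i \<omega>) (\<lambda>i. 0) 2))) ?L"
    by (simp add: gram_gd_two_steps)
  have "continuous_on UNIV
      (\<lambda>p. (eta * fst p * (1 + eta\<^sup>2 * ?gain (fst p) * snd p))\<^sup>2 *\<^sub>R outer (?row (fst p)))"
    by (intro continuous_intros)
  from conv_in_prob_continuous_map[OF mean_sq_limit lim_1_over_n this]
  have grad_limit: "conv_in_prob M (\<lambda>k \<omega>. outer (case gd k eta X y (\<lambda>i. A0 k i \<omega>) (\<lambda>i. 0) 2 of
      (A, B) \<Rightarrow> net_grad k A B)) ?L"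
    by (simp add: outer_net_grad_gd_two_steps)
  show ?thesis
    using gram_limit grad_limit by blast
qed

end
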